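(* Let $(X,d)$ be a complete metric space and let $\mathcal{F}=\{X; f_{\lambda}\mid\lambda\in\Lambda\}$ be a parameterized iterated function system which is uniformly contracting. Then $\mathcal{F}$ has the average shadowing property on $\mathbb{Z}_+$.
   Context: A parameterized iterated function system (IFS) $\mathcal{F}=\{X; f_{\lambda}\mid\lambda\in\Lambda\}$ on a complete metric space $(X,d)$ is a family of continuous maps $f_\lambda:X\to X$ indexed by a finite nonempty set $\Lambda$. It is uniformly contracting if $\beta=\sup_{\lambda\in\Lambda}\sup_{x\ne y}\frac{d(f_\lambda(x),f_\lambda(y))}{d(x,y)}$ exists and $\beta<1$. For $\sigma=(\lambda_0,\lambda_1,\dots)\in\Lambda^{\mathbb{Z}_+}$ write $\mathcal{F}_{\sigma_n}=f_{\lambda_{n-1}}\circ\cdots\circ f_{\lambda_0}$ for $n\ge1$ and $\mathcal{F}_{\sigma_0}=\mathrm{id}_X$. For $\delta>0$, a sequence $(x_i)_{i\ge0}$ in $X$ is a $\delta$-average pseudo-orbit of $\mathcal{F}$ if there exist a natural number $N$ and $\sigma=(\lambda_0,\lambda_1,\dots)\in\Lambda^{\mathbb{Z}_+}$ such that for all $n\ge N$, $\frac1n\sum_{i=0}^{n-1}d(f_{\lambda_i}(x_i),x_{i+1})<\delta$. A sequence $(x_i)_{i\ge0}$ is $\epsilon$-shadowed in average by $z\in X$ if there exists $\sigma\in\Lambda^{\mathbb{Z}_+}$ with $\limsup_{n\to\infty}\frac1n\sum_{i=0}^{n-1}d(\mathcal{F}_{\sigma_i}(z),x_i)<\epsilon$.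 $\mathcal{F}$ has the average shadowing property (on $\mathbb{Z}_+$) if for every $\epsilon>0$ there is $\delta>0$ such that every $\delta$-average pseudo-orbit of $\mathcal{F}$ is $\epsilon$-shadowed in average by some point of $X$. *)

theory Defs
  imports "HOL-Analysis.Analysis"
begin

definition uniformly_contracting :: "'l set \<Rightarrow> ('l \<Rightarrow> 'a::metric_space \<Rightarrow> 'a) \<Rightarrow> bool" where
  "uniformly_contracting L f \<longleftrightarrow>
     (\<exists>\<beta>::real. \<beta> < 1 \<and>
        (\<forall>l\<in>L. \<forall>x y. x \<noteq> y \<longrightarrow> dist (f l x) (f l y) / dist x y \<le> \<beta>))"

fun ifs_comp :: "('l \<Rightarrow> 'a \<Rightarrow> 'a) \<Rightarrow> (nat \<Rightarrow> 'l) \<Rightarrow> nat \<Rightarrow> 'a \<Rightarrow> 'a" where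
  "ifs_comp f \<sigma> 0 = id"
| "ifs_comp f \<sigma> (Suc n) = f (\<sigma> n) \<circ> ifs_comp f \<sigma> n"

definition avg_pseudo_orbit ::
  "'l set \<Rightarrow> ('l \<Rightarrow> 'a::metric_space \<Rightarrow> 'a) \<Rightarrow> real \<Rightarrow> (nat \<Rightarrow> 'a) \<Rightarrow> bool" where
  "avg_pseudo_orbit L f \<delta> xs \<longleftrightarrow>
     (\<exists>N::nat. \<exists>\<sigma>::nat \<Rightarrow> 'l. (\<forall>i. \<sigma> i \<in> L) \<and>
        (\<forall>n\<ge>N. n > 0 \<longrightarrow> (\<Sum>i<n. dist (f (\<sigma> i) (xs i)) (xs (Suc i))) / real n < \<delta>))"

definition avg_shadowed ::
  "'l set \<Rightarrow> ('l \<Rightarrow> 'a::metric_space \<Rightarrow> 'a) \<Rightarrow> real \<Rightarrow> (nat \<Rightarrow> 'a) \<Rightarrow> 'a \<Rightarrow> bool" where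
  "avg_shadowed L f \<epsilon> xs z \<longleftrightarrow>
     (\<exists>\<sigma>::nat \<Rightarrow> 'l. (\<forall>i. \<sigma> i \<in> L) \<and>
        limsup (\<lambda>n. ereal ((\<Sum>i<n. dist (ifs_comp f \<sigma> i z) (xs i)) / real n)) < ereal \<epsilon>)"

definition average_shadowing_property ::
  "'l set \<Rightarrow> ('l \<Rightarrow> 'a::metric_space \<Rightarrow> 'a) \<Rightarrow> bool" where
  "average_shadowing_property L f \<longleftrightarrow>
     (\<forall>\<epsilon>>0. \<exists>\<delta>>0. \<forall>xs. avg_pseudo_orbit L f \<delta> xs \<longrightarrow> (\<exists>z. avg_shadowed L f \<epsilon> xs z))"

end

theory Submission
  imports Defs
begin

text \<open>Proof idea: shadow a \<open>\<delta>\<close>-average pseudo-orbit \<open>x\<close> by the orbit of \<open>x 0\<close> under the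
  same parameter sequence \<open>\<sigma>\<close>. If \<open>D i\<close> is the distance between the \<open>i\<close>-th orbit point and
  \<open>x i\<close>, and \<open>e i = d (f\<^sub>\<sigma>\<^sub>(\<^sub>i\<^sub>) (x i)) (x (i + 1))\<close> the \<open>i\<close>-th jump of \<open>x\<close>, contraction gives
  \<open>D (i + 1) \<le> \<beta> D i + e i\<close> with \<open>D 0 = 0\<close>; summing yields \<open>(1 - \<beta>) \<Sum>\<^sub>i\<^sub><\<^sub>n D i \<le> \<Sum>\<^sub>i\<^sub><\<^sub>n e i\<close>, so the
  averages of \<open>D\<close> are eventually at most \<open>\<delta> / (1 - \<beta>)\<close>, which is below \<open>\<epsilon>\<close> once
  \<open>\<delta> < (1 - \<beta>) \<epsilon>\<close>. Finiteness of the index set and continuity of the maps are not needed.\<close>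

lemma uniformly_contractingE:
  assumes "uniformly_contracting L f"
  obtains \<beta> :: real where "0 \<le> \<beta>" "\<beta> < 1"
    and "\<forall>l\<in>L. \<forall>x y. dist (f l x) (f l y) \<le> \<beta> * dist x y"
proof -
  obtain \<beta>0 :: real where "\<beta>0 < 1"
    and ratio: "\<forall>l\<in>L. \<forall>x y. x \<noteq> y \<longrightarrow> dist (f l x) (f l y) / dist x y \<le> \<beta>0"
    using assms unfolding uniformly_contracting_def by auto
  have bound: "dist (f l x) (f l y) \<le> max \<beta>0 0 * dist x y" if "l \<in> L" for l x y
  proof (cases "x = y")
    case False
    with ratio \<open>l \<in> L\<close> have "dist (f l x) (f l y) / dist x y \<le> \<beta>0" by blast
    with False have "dist (f l x) (f l y) \<le> \<beta>0 * dist x y" by (simp add: divide_le_eq)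
    also have "\<dots> \<le> max \<beta>0 0 * dist x y" by (intro mult_right_mono) simp_all
    finally show ?thesis .
  qed simp
  show thesis
    using that[of "max \<beta>0 0"] \<open>\<beta>0 < 1\<close> bound by auto
qed

lemma sum_le_of_linear_recurrence:
  fixes D e :: "nat \<Rightarrow> real" and b :: real
  assumes "\<And>i. 0 \<le> D i" and "\<And>i. 0 \<le> e i" and "0 \<le> b"
    and step: "\<And>i. D (Suc i) \<le> b * D i + e i"
  shows "(1 - b) * (\<Sum>i<m. D i) \<le> D 0 + (\<Sum>i<m. e i)"
proof (cases m)
  case (Suc n)
  have "(\<Sum>i<Suc n. D i) = D 0 + (\<Sum>i<n. D (Suc i))"
    by (subst sum.lessThan_Suc_shift) simp
  also have "\<dots> \<le> D 0 + (\<Sum>i<n. b * D i + e i)"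
    using step by (simp add: sum_mono)
  also have "\<dots> = D 0 + b * (\<Sum>i<n. D i) + (\<Sum>i<n. e i)"
    by (simp add: sum.distrib sum_distrib_left)
  also have "\<dots> \<le> D 0 + b * (\<Sum>i<Suc n. D i) + (\<Sum>i<Suc n. e i)"
    using assms by (simp add: add_mono mult_left_mono)
  finally show ?thesis unfolding Suc by (simp add: algebra_simps)
qed (simp add: assms)

lemma dist_ifs_comp_Suc_le:
  assumes "\<And>x y. dist (f (\<sigma> i) x) (f (\<sigma> i) y) \<le> \<beta> * dist x y"
  shows "dist (ifs_comp f \<sigma> (Suc i) z) (xs (Suc i))
           \<le> \<beta> * dist (ifs_comp f \<sigma> i z) (xs i) + dist (f (\<sigma> i) (xs i)) (xs (Suc i))"
proof -
  have "dist (ifs_comp f \<sigma> (Suc i) z) (xs (Suc i))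
          \<le> dist (f (\<sigma> i) (ifs_comp f \<sigma> i z)) (f (\<sigma> i) (xs i)) + dist (f (\<sigma> i) (xs i)) (xs (Suc i))"
    by (simp add: dist_triangle)
  with assms show ?thesis by (meson add_right_mono order_trans)
qed

lemma sum_dist_ifs_comp_le:
  assumes "0 \<le> \<beta>" and "\<And>i x y. dist (f (\<sigma> i) x) (f (\<sigma> i) y) \<le> \<beta> * dist x y"
  shows "(1 - \<beta>) * (\<Sum>i<n. dist (ifs_comp f \<sigma> i z) (xs i))
           \<le> dist z (xs 0) + (\<Sum>i<n. dist (f (\<sigma> i) (xs i)) (xs (Suc i)))"
proof -
  have "(1 - \<beta>) * (\<Sum>i<n. dist (ifs_comp f \<sigma> i z) (xs i))
          \<le> dist (ifs_comp f \<sigma> 0 z) (xs 0) + (\<Sum>i<n. dist (f (\<sigma> i) (xs i)) (xs (Suc i)))"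
    by (rule sum_le_of_linear_recurrence)
      (auto intro: assms dist_ifs_comp_Suc_le simp del: ifs_comp.simps)
  then show ?thesis by simp
qed

lemma avg_pseudo_orbit_avg_shadowed:
  assumes "0 \<le> \<beta>" "\<beta> < 1"
    and contr: "\<forall>l\<in>L. \<forall>x y. dist (f l x) (f l y) \<le> \<beta> * dist x y"
    and "avg_pseudo_orbit L f \<delta> xs" and "\<delta> < (1 - \<beta>) * \<epsilon>"
  shows "avg_shadowed L f \<epsilon> xs (xs 0)"
proof -
  obtain N \<sigma> where \<sigma>: "\<forall>i. \<sigma> i \<in> L" and avg:
    "\<forall>n\<ge>N. n > 0 \<longrightarrow> (\<Sum>i<n. dist (f (\<sigma> i) (xs i)) (xs (Suc i))) / real n < \<delta>"
    using assms(4) unfolding avg_pseudo_orbit_def by blast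
  have lipschitz: "\<And>i x y. dist (f (\<sigma> i) x) (f (\<sigma> i) y) \<le> \<beta> * dist x y"
    using contr \<sigma> by blast
  define A where "A n = (\<Sum>i<n. dist (ifs_comp f \<sigma> i (xs 0)) (xs i)) / real n" for n
  have "A n \<le> \<delta> / (1 - \<beta>)" if "max N 1 \<le> n" for n
  proof -
    have "(\<Sum>i<n. dist (f (\<sigma> i) (xs i)) (xs (Suc i))) < \<delta> * real n"
      using avg that by (simp add: pos_divide_less_eq)
    moreover have "(1 - \<beta>) * (\<Sum>i<n. dist (ifs_comp f \<sigma> i (xs 0)) (xs i))
        \<le> (\<Sum>i<n. dist (f (\<sigma> i) (xs i)) (xs (Suc i)))"
      using sum_dist_ifs_comp_le[where f = f and \<sigma> = \<sigma> and n = n and z = "xs 0" and xs = xs,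
          OF assms(1) lipschitz] by simp
    ultimately have "(1 - \<beta>) * (\<Sum>i<n. dist (ifs_comp f \<sigma> i (xs 0)) (xs i)) \<le> \<delta> * real n"
      by linarith
    then show ?thesis
      using that \<open>\<beta> < 1\<close> by (simp add: A_def field_simps)
  qed
  then have "eventually (\<lambda>n. ereal (A n) \<le> ereal (\<delta> / (1 - \<beta>))) sequentially"
    by (intro eventually_sequentiallyI[of "max N 1"]) simp
  then have "limsup (\<lambda>n. ereal (A n)) \<le> ereal (\<delta> / (1 - \<beta>))"
    by (rule Limsup_bounded)
  also have "\<dots> < ereal \<epsilon>"
    using assms(2,5) by (simp add: pos_divide_less_eq mult.commute)
  finally show ?thesis unfolding avg_shadowed_def A_def using \<sigma> by blast
qed

theorem mainTheorem2:
  fixes L :: "'l set" and f :: "'l \<Rightarrow> 'a::complete_space \<Rightarrow> 'a"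
  assumes "finite L" and "L \<noteq> {}"
    and "\<forall>l\<in>L. continuous_on UNIV (f l)"
    and "uniformly_contracting L f"
  shows "average_shadowing_property L f"
proof -
  obtain \<beta> :: real where \<beta>: "0 \<le> \<beta>" "\<beta> < 1"
    and contr: "\<forall>l\<in>L. \<forall>x y. dist (f l x) (f l y) \<le> \<beta> * dist x y"
    using uniformly_contractingE[OF assms(4)] by blast
  show ?thesis unfolding average_shadowing_property_def
  proof (intro allI impI)
    fix \<epsilon> :: real assume "\<epsilon> > 0"
    then have "0 < (1 - \<beta>) * \<epsilon> / 2" and less: "(1 - \<beta>) * \<epsilon> / 2 < (1 - \<beta>) * \<epsilon>"
      using \<beta> by simp_all
    moreover have "avg_shadowed L f \<epsilon> xs (xs 0)"
      if "avg_pseudo_orbit L f ((1 - \<beta>) * \<epsilon> / 2) xs" for xs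
      using avg_pseudo_orbit_avg_shadowed[OF \<beta> contr that less] .
    ultimately show "\<exists>\<delta>>0. \<forall>xs. avg_pseudo_orbit L f \<delta> xs \<longrightarrow> (\<exists>z. avg_shadowed L f \<epsilon> xs z)"
      by blast
  qed
qed

end
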